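(* Let $X$, $Y$ be disjoint sets of cardinality at least two, $M\le\mathrm{Sym}(X)$ and $N\le\mathrm{Sym}(Y)$ nontrivial permutation groups, $T$ the $(|X|,|Y|)$-biregular tree, and $c$ a legal colouring. For $v\in V_X$ and $w\in V_Y$, the set $\hat{M}(v) := \{g_{\mu,v} : \mu\in M\}$ is a subgroup of the stabiliser $U_c(M,N)_v$ and $\hat{N}(w):=\{g_{\tau,w} : \tau\in N\}$ is a subgroup of $U_c(M,N)_w$. Moreover $\hat{M}(v)$ is isomorphic to $M$ and $\hat{N}(w)$ is isomorphic to $N$.
   Context: $T$ has natural bipartition $VT=V_X\sqcup V_Y$ (vertices in $V_X$ have valency $|X|$, in $V_Y$ valency $|Y|$). $A(v)$, $\overline{A}(v)$ are the sets of arcs with origin, resp. terminus, $v$. A legal colouring is a map $c:AT\to X\cup Y$ restricting to a bijection $A(v)\to X$ for $v\in V_X$, to a bijection $A(v)\to Y$ for $v\in V_Y$, and constant on each $\overline{A}(v)$. $U_c(M,N)$ is the group of $g\in\mathrm{Aut}(T)$ with $gV_X=V_X$ and $c|_{A(gv)}\circ g|_{A(v)}\circ(c|_{A(v)})^{-1}$ in $M$ for $v\in V_X$ and in $N$ for $v\in V_Y$. For $\mu\in M$, let $\hat\mu\in\mathrm{Sym}(X\cup Y)$ equal $\mu$ on $X$ and the identity on $Y$; for $v\in V_X$, $g_{\mu,v}$ denotes the unique $g\in\mathrm{Aut}(T)$ with $gV_X=V_X$, $gv=v$ and $c=\hat\mu\circ c\circ g$ (such $g$ exists and is unique, and lies in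 $U_c(M,N)$). For $\tau\in N$ and $w\in V_Y$, $\hat\tau$ (equal to $\tau$ on $Y$ and the identity on $X$) and $g_{\tau,w}$ are defined analogously. *)

theory Defs
  imports "HOL-Algebra.Bij"
begin

text \<open>A tree on the vertex type 'v, given by its (symmetric, irreflexive) adjacency
  relation E; arcs are the ordered pairs in E.\<close>

definition is_tree :: "('v \<times> 'v) set \<Rightarrow> bool" where
  "is_tree E \<longleftrightarrow> sym E \<and> irrefl E \<and> (\<forall>u w. (u, w) \<in> E\<^sup>*) \<and>
     \<not> (\<exists>xs. length xs \<ge> 3 \<and> distinct xs \<and>
          (\<forall>i. Suc i < length xs \<longrightarrow> (xs ! i, xs ! Suc i) \<in> E) \<and> (last xs, hd xs) \<in> E)"

definition arcs_out :: "('v \<times> 'v) set \<Rightarrow> 'v \<Rightarrow> ('v \<times> 'v) set" where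
  "arcs_out E v = {a \<in> E. fst a = v}"

definition arcs_in :: "('v \<times> 'v) set \<Rightarrow> 'v \<Rightarrow> ('v \<times> 'v) set" where
  "arcs_in E v = {a \<in> E. snd a = v}"

definition Aut :: "('v \<times> 'v) set \<Rightarrow> ('v \<Rightarrow> 'v) set" where
  "Aut E = {g. bij g \<and> (\<forall>u w. (u, w) \<in> E \<longleftrightarrow> (g u, g w) \<in> E)}"

definition amap :: "('v \<Rightarrow> 'v) \<Rightarrow> 'v \<times> 'v \<Rightarrow> 'v \<times> 'v" where
  "amap g a = (g (fst a), g (snd a))"

definition bipartition :: "('v \<times> 'v) set \<Rightarrow> 'v set \<Rightarrow> 'v set \<Rightarrow> bool" where
  "bipartition E VX VY \<longleftrightarrow> VX \<inter> VY = {} \<and> VX \<union> VY = UNIV \<and>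
     (\<forall>(u, w) \<in> E. (u \<in> VX \<and> w \<in> VY) \<or> (u \<in> VY \<and> w \<in> VX))"

definition legal_colouring ::
  "('v \<times> 'v) set \<Rightarrow> 'v set \<Rightarrow> 'v set \<Rightarrow> 'c set \<Rightarrow> 'c set \<Rightarrow> ('v \<times> 'v \<Rightarrow> 'c) \<Rightarrow> bool" where
  "legal_colouring E VX VY X Y c \<longleftrightarrow>
     (\<forall>v \<in> VX. bij_betw c (arcs_out E v) X) \<and>
     (\<forall>v \<in> VY. bij_betw c (arcs_out E v) Y) \<and>
     (\<forall>v. \<forall>a \<in> arcs_in E v. \<forall>b \<in> arcs_in E v. c a = c b)"

text \<open>Local action  c|A(gv) o g|A(v) o (c|A(v))^-1  as an element of Sym(S)
  (extensional on S, as in HOL-Algebra's BijGroup S).\<close>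
definition local_action ::
  "('v \<times> 'v) set \<Rightarrow> ('v \<times> 'v \<Rightarrow> 'c) \<Rightarrow> 'c set \<Rightarrow> ('v \<Rightarrow> 'v) \<Rightarrow> 'v \<Rightarrow> 'c \<Rightarrow> 'c" where
  "local_action E c S g v = restrict (\<lambda>x. c (amap g (the_inv_into (arcs_out E v) c x))) S"

definition U_c ::
  "('v \<times> 'v) set \<Rightarrow> 'v set \<Rightarrow> 'v set \<Rightarrow> 'c set \<Rightarrow> 'c set \<Rightarrow> ('v \<times> 'v \<Rightarrow> 'c)
    \<Rightarrow> ('c \<Rightarrow> 'c) set \<Rightarrow> ('c \<Rightarrow> 'c) set \<Rightarrow> ('v \<Rightarrow> 'v) set" where
  "U_c E VX VY X Y c M N = {g \<in> Aut E. g ` VX = VX \<and>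
      (\<forall>v \<in> VX. local_action E c X g v \<in> M) \<and> (\<forall>v \<in> VY. local_action E c Y g v \<in> N)}"

definition stab :: "('v \<Rightarrow> 'v) set \<Rightarrow> 'v \<Rightarrow> ('v \<Rightarrow> 'v) set" where
  "stab G v = {g \<in> G. g v = v}"

definition hat :: "'c set \<Rightarrow> ('c \<Rightarrow> 'c) \<Rightarrow> 'c \<Rightarrow> 'c" where
  "hat S \<mu> z = (if z \<in> S then \<mu> z else z)"

definition g_at ::
  "('v \<times> 'v) set \<Rightarrow> 'v set \<Rightarrow> ('v \<times> 'v \<Rightarrow> 'c) \<Rightarrow> 'c set \<Rightarrow> ('c \<Rightarrow> 'c) \<Rightarrow> 'v \<Rightarrow> 'v \<Rightarrow> 'v" where
  "g_at E VX c S \<mu> v = (THE g. g \<in> Aut E \<and> g ` VX = VX \<and> g v = v \<and>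
       (\<forall>a \<in> E. c a = hat S \<mu> (c (amap g a))))"

end

theory Submission
  imports Defs
begin

(*
  For a permutation \<sigma> of the colours that maps X into itself and fixes Y pointwise, start at the
  root r \<in> V_X and follow the colour word of the tree path from r to u with every colour replaced
  by its \<sigma>-image. This defines a map fixing r that sends arcs to arcs and recolours them by \<sigma>; it
  is the only such map, because an edge-preserving map of a connected legally coloured graph is
  determined by one value and its effect on colours. Composition of such maps corresponds to
  composition of recolourings, so for invertible \<sigma> they are automorphisms, and for
  \<sigma> = hat (\<mu>\<inverse>) one obtains g_{\<mu>,r}. Its local action is \<mu>\<inverse> at the vertices of V_X and trivial
  at those of V_Y, so g_{\<mu>,r} lies in the stabiliser of r in U_c(M,N), and \<mu> \<mapsto> g_{\<mu>\<inverse>,r} is an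
  injective homomorphism from M, whose image is thus a subgroup isomorphic to M. The statement for
  N at w \<in> V_Y is the same one with the roles of X and Y exchanged.
*)

section \<open>Simple paths in trees\<close>

abbreviation is_walk :: "('v \<times> 'v) set \<Rightarrow> 'v list \<Rightarrow> bool" where
  "is_walk E \<equiv> successively (\<lambda>x y. (x, y) \<in> E)"

definition simple_path :: "('v \<times> 'v) set \<Rightarrow> 'v list \<Rightarrow> bool" where
  "simple_path E xs \<longleftrightarrow> xs \<noteq> [] \<and> is_walk E xs \<and> distinct xs"

lemma tree_sym: "is_tree E \<Longrightarrow> (a, b) \<in> E \<Longrightarrow> (b, a) \<in> E"
  unfolding is_tree_def by (meson symD)

lemma tree_irrefl: "is_tree E \<Longrightarrow> (a, a) \<notin> E"
  unfolding is_tree_def by (meson irrefl_def)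

lemma tree_connected: "is_tree E \<Longrightarrow> (u, w) \<in> E\<^sup>*"
  unfolding is_tree_def by blast

lemma tree_no_cycle:
  "is_tree E \<Longrightarrow> length xs \<ge> 3 \<Longrightarrow> distinct xs \<Longrightarrow> is_walk E xs \<Longrightarrow>
    (last xs, hd xs) \<in> E \<Longrightarrow> False"
  unfolding is_tree_def successively_conv_nth by blast

lemma simple_path_prefix: "simple_path E (a @ x # b) \<Longrightarrow> simple_path E (a @ [x])"
  unfolding simple_path_def
  by (metis append.assoc append_Cons append_Nil distinct_append not_Cons_self2 snoc_eq_iff_butlast
      successively_append_iff)

lemma simple_path_suffix: "simple_path E (a @ x # b) \<Longrightarrow> simple_path E (x # b)"
  unfolding simple_path_def by (simp add: successively_append_iff)

lemma simple_path_snoc: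
  "simple_path E p \<Longrightarrow> (last p, u) \<in> E \<Longrightarrow> u \<notin> set p \<Longrightarrow> simple_path E (p @ [u])"
  unfolding simple_path_def by (simp add: successively_append_iff)

lemma simple_path_closed: "simple_path E xs \<Longrightarrow> hd xs = last xs \<Longrightarrow> xs = [hd xs]"
  unfolding simple_path_def by (cases xs) (auto split: if_splits)

lemma hd_last_split: "xs \<noteq> [] \<Longrightarrow> hd xs \<noteq> last xs \<Longrightarrow> \<exists>xm. xs = hd xs # xm @ [last xs]"
  by (cases xs) (simp_all, metis append_butlast_last_id)

lemma tree_no_two_disjoint_paths:
  assumes tree: "is_tree E"
    and xs: "simple_path E (s # xm @ [z])" and ys: "simple_path E (s # ym @ [z])"
    and nonempty: "xm \<noteq> [] \<or> ym \<noteq> []" and disjoint: "set ym \<inter> set (s # xm @ [z]) = {}"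
  shows False
proof -
  let ?cycle = "(s # xm @ [z]) @ rev ym"
  have walk_ym: "is_walk E ((s # ym) @ [z])" using ys unfolding simple_path_def by simp
  then have "is_walk E (rev ym)"
    by (auto simp: successively_Cons successively_append_iff tree_sym[OF tree]
        intro: successively_mono[of _ ym])
  moreover have "(z, hd (rev ym)) \<in> E" if "ym \<noteq> []"
    using walk_ym that tree_sym[OF tree] successively_append_iff[of _ "s # ym" "[z]"]
    by (simp add: hd_rev)
  ultimately have "is_walk E ?cycle"
    using xs unfolding simple_path_def successively_append_iff[of _ "s # xm @ [z]"]
    by (auto simp del: successively_rev)
  moreover have "distinct ?cycle" using xs ys disjoint unfolding simple_path_def by auto
  moreover have "length ?cycle \<ge> 3" using nonempty by (auto simp: Suc_le_eq)
  moreover have "(last ?cycle, hd ?cycle) \<in> E"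
  proof (cases ym)
    case Nil
    then show ?thesis using ys tree_sym[OF tree] unfolding simple_path_def by simp
  next
    case (Cons y ym')
    then show ?thesis using ys tree_sym[OF tree] unfolding simple_path_def by (simp add: last_rev)
  qed
  ultimately show False using tree_no_cycle[OF tree] by blast
qed

text \<open>Two such paths either meet in a vertex that is interior to one of them, which splits both
  into shorter pairs, or their interiors are disjoint and they close up to a cycle.\<close>

lemma simple_path_unique:
  assumes tree: "is_tree E"
  shows "simple_path E xs \<Longrightarrow> simple_path E ys \<Longrightarrow> hd xs = hd ys \<Longrightarrow> last xs = last ys \<Longrightarrow> xs = ys"
proof (induction "length xs + length ys" arbitrary: xs ys rule: less_induct)
  case less
  let ?split = "\<lambda>a b a' b' x. xs = a @ x # b \<and> ys = a' @ x # b' \<and> (a \<noteq> [] \<or> a' \<noteq> []) \<and> (b \<noteq> [] \<or> b' \<noteq> [])"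
  show ?case
  proof (cases "\<exists>a b a' b' x. ?split a b a' b' x")
    case True
    then obtain a b a' b' x where xs: "xs = a @ x # b" and ys: "ys = a' @ x # b'"
      and heads: "a \<noteq> [] \<or> a' \<noteq> []" and tails: "b \<noteq> [] \<or> b' \<noteq> []" by blast
    have "a @ [x] = a' @ [x]"
      using less.prems xs ys tails
      by (intro less.hyps simple_path_prefix) (auto simp: hd_append split: if_splits)
    moreover have "x # b = x # b'"
      using less.prems xs ys heads by (intro less.hyps simple_path_suffix) auto
    ultimately show ?thesis using xs ys by simp
  next
    case no_split: False
    show ?thesis
    proof (cases "hd xs = last xs")
      case True
      then show ?thesis using less.prems simple_path_closed by metis
    next
      case False
      then obtain s xm z ym where xs: "xs = s # xm @ [z]" and ys: "ys = s # ym @ [z]"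
        using less.prems hd_last_split[of xs] hd_last_split[of ys] unfolding simple_path_def by metis
      show ?thesis
      proof (cases "xm = [] \<and> ym = []")
        case True
        then show ?thesis using xs ys by simp
      next
        case False
        have "y \<notin> set xs" if "y \<in> set ym" for y
        proof
          assume "y \<in> set xs"
          then obtain a b where "xs = a @ y # b" by (meson split_list)
          moreover obtain ym1 ym2 where "ym = ym1 @ y # ym2" using \<open>y \<in> set ym\<close> by (meson split_list)
          ultimately have "?split a b (s # ym1) (ym2 @ [z]) y" using ys by simp
          then show False using no_split by blast
        qed
        then show ?thesis
          using tree_no_two_disjoint_paths[OF tree] less.prems False xs ys by blast
      qed
    qed
  qed
qed

lemma simple_path_exists: "(r, u) \<in> E\<^sup>* \<Longrightarrow> \<exists>p. simple_path E p \<and> hd p = r \<and> last p = u"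
proof (induction rule: rtrancl_induct)
  case base
  show ?case by (rule exI[of _ "[r]"]) (simp add: simple_path_def)
next
  case (step u u')
  then obtain p where p: "simple_path E p" "hd p = r" "last p = u" by blast
  show ?case
  proof (cases "u' \<in> set p")
    case False
    then show ?thesis
      using p step(2) simple_path_snoc[of E p u'] by (intro exI[of _ "p @ [u']"]) (simp add: simple_path_def)
  next
    case True
    then obtain a b where "p = a @ u' # b" by (meson split_list)
    then show ?thesis
      using p simple_path_prefix[of E a u' b] by (intro exI[of _ "a @ [u']"]) (cases a, auto)
  qed
qed

definition tree_path :: "('v \<times> 'v) set \<Rightarrow> 'v \<Rightarrow> 'v \<Rightarrow> 'v list" where
  "tree_path E r u = (THE p. simple_path E p \<and> hd p = r \<and> last p = u)"

lemma tree_path_eq: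
  assumes "is_tree E" "simple_path E p" "hd p = r" "last p = u"
  shows "tree_path E r u = p"
  unfolding tree_path_def using assms simple_path_unique[OF assms(1)] by (intro the_equality) auto

lemma tree_path:
  assumes "is_tree E"
  shows "simple_path E (tree_path E r u) \<and> hd (tree_path E r u) = r \<and> last (tree_path E r u) = u"
  using simple_path_exists[OF tree_connected[OF assms]] tree_path_eq[OF assms] by metis

lemma tree_path_edge:
  assumes tree: "is_tree E" and edge: "(u, u') \<in> E"
  shows "tree_path E r u' = tree_path E r u @ [u'] \<or> tree_path E r u = tree_path E r u' @ [u]"
proof (cases "u' \<in> set (tree_path E r u)")
  case False
  then show ?thesis
    using tree_path[OF tree, of r u] edge simple_path_snoc tree_path_eq[OF tree]
    by (metis hd_append2 simple_path_def last_snoc)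
next
  case True
  let ?p = "tree_path E r u"
  obtain a b where ab: "?p = a @ u' # b" using True by (meson split_list)
  have "tree_path E r u' = a @ [u']"
    using tree_path[OF tree, of r u] ab simple_path_prefix tree_path_eq[OF tree]
    by (metis hd_append last_snoc list.sel(1))
  moreover have "u' # b = [u', u]"
  proof (rule simple_path_unique[OF tree])
    show "simple_path E (u' # b)" using tree_path[OF tree, of r u] ab simple_path_suffix by metis
    show "simple_path E [u', u]"
      using tree_sym[OF tree edge] tree_irrefl[OF tree, of u] edge unfolding simple_path_def by auto
    show "last (u' # b) = last [u', u]" using tree_path[OF tree, of r u] ab by simp
  qed simp
  ultimately show ?thesis using ab by simp
qed

section \<open>Legally coloured trees\<close>

definition nbr :: "('v \<times> 'v) set \<Rightarrow> ('v \<times> 'v \<Rightarrow> 'c) \<Rightarrow> 'v \<Rightarrow> 'c \<Rightarrow> 'v" where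
  "nbr E c u x = (THE u'. (u, u') \<in> E \<and> c (u, u') = x)"

primrec follow :: "('v \<times> 'v) set \<Rightarrow> ('v \<times> 'v \<Rightarrow> 'c) \<Rightarrow> 'v \<Rightarrow> 'c list \<Rightarrow> 'v" where
  "follow E c u [] = u"
| "follow E c u (x # xs) = follow E c (nbr E c u x) xs"

fun colour_word :: "('v \<times> 'v \<Rightarrow> 'c) \<Rightarrow> 'v list \<Rightarrow> 'c list" where
  "colour_word c (x # y # xs) = c (x, y) # colour_word c (y # xs)"
| "colour_word c _ = []"

lemma follow_snoc: "follow E c u (xs @ [x]) = nbr E c (follow E c u xs) x"
  by (induction xs arbitrary: u) auto

lemma colour_word_snoc: "xs \<noteq> [] \<Longrightarrow> colour_word c (xs @ [y]) = colour_word c xs @ [c (last xs, y)]"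
  by (induction xs rule: induct_list012) auto

locale legal_tree =
  fixes E :: "('v \<times> 'v) set" and VX VY :: "'v set" and X Y :: "'c set" and c :: "'v \<times> 'v \<Rightarrow> 'c"
  assumes tree: "is_tree E" and bip: "bipartition E VX VY"
    and col: "legal_colouring E VX VY X Y c" and disj: "X \<inter> Y = {}"
begin

lemma VY_eq: "VY = - VX"
  using bip unfolding bipartition_def by auto

lemma edge_sides: "(a, b) \<in> E \<Longrightarrow> a \<in> VX \<longleftrightarrow> b \<notin> VX"
  using bip unfolding bipartition_def by blast

lemma out_colours: "bij_betw c (arcs_out E a) (if a \<in> VX then X else Y)"
  using col VY_eq unfolding legal_colouring_def by (cases "a \<in> VX") simp_all

lemma arc_out: "(a, b) \<in> E \<Longrightarrow> (a, b) \<in> arcs_out E a"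
  unfolding arcs_out_def by simp

lemma out_colour: "(a, b) \<in> E \<Longrightarrow> c (a, b) \<in> (if a \<in> VX then X else Y)"
  by (rule bij_betw_apply[OF out_colours arc_out])

lemma out_colour_inj: "(a, b) \<in> E \<Longrightarrow> (a, b') \<in> E \<Longrightarrow> c (a, b) = c (a, b') \<Longrightarrow> b = b'"
  using inj_onD[OF bij_betw_imp_inj_on[OF out_colours] _ arc_out arc_out] by blast

lemma out_colour_surj:
  assumes "x \<in> (if a \<in> VX then X else Y)"
  shows "\<exists>b. (a, b) \<in> E \<and> c (a, b) = x"
proof -
  obtain e where "e \<in> arcs_out E a" "c e = x"
    using bij_betw_imp_surj_on[OF out_colours, of a] assms by (metis imageE)
  then show ?thesis unfolding arcs_out_def by (cases e) auto
qed

lemma in_colours_eq: "(x, z) \<in> E \<Longrightarrow> (y, z) \<in> E \<Longrightarrow> c (x, z) = c (y, z)"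
proof -
  assume "(x, z) \<in> E" "(y, z) \<in> E"
  then have "(x, z) \<in> arcs_in E z" "(y, z) \<in> arcs_in E z" unfolding arcs_in_def by simp_all
  then show ?thesis using col unfolding legal_colouring_def by blast
qed

lemma nbr_edge:
  assumes "x \<in> (if a \<in> VX then X else Y)"
  shows "(a, nbr E c a x) \<in> E \<and> c (a, nbr E c a x) = x"
proof -
  obtain b where b: "(a, b) \<in> E \<and> c (a, b) = x" using out_colour_surj[OF assms] by blast
  then show ?thesis unfolding nbr_def by (rule theI) (metis b out_colour_inj)
qed

lemma maps_eq_if_same_colours:
  assumes h1: "\<And>a b. (a, b) \<in> E \<Longrightarrow> (h1 a, h1 b) \<in> E"
    and h2: "\<And>a b. (a, b) \<in> E \<Longrightarrow> (h2 a, h2 b) \<in> E"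
    and colours: "\<And>a b. (a, b) \<in> E \<Longrightarrow> c (h1 a, h1 b) = c (h2 a, h2 b)"
    and root: "h1 r = h2 r"
  shows "h1 = h2"
proof
  fix u
  have "(r, u) \<in> E\<^sup>*" by (rule tree_connected[OF tree])
  then show "h1 u = h2 u"
  proof (induction rule: rtrancl_induct)
    case base
    show ?case by (rule root)
  next
    case (step y z)
    have "(h1 y, h1 z) \<in> E" "(h1 y, h2 z) \<in> E" using h1[OF step(2)] h2[OF step(2)] step.IH by auto
    moreover have "c (h1 y, h1 z) = c (h1 y, h2 z)" using colours[OF step(2)] step.IH by simp
    ultimately show ?case by (rule out_colour_inj)
  qed
qed

definition recolouring :: "('c \<Rightarrow> 'c) \<Rightarrow> bool" where
  "recolouring \<sigma> \<longleftrightarrow> (\<forall>x \<in> X. \<sigma> x \<in> X) \<and> (\<forall>y \<in> Y. \<sigma> y = y)"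

lemma recolouring_out_colour:
  "recolouring \<sigma> \<Longrightarrow> (a \<in> VX \<longleftrightarrow> a' \<in> VX) \<Longrightarrow> (a, b) \<in> E \<Longrightarrow>
    \<sigma> (c (a, b)) \<in> (if a' \<in> VX then X else Y)"
  using out_colour[of a b] unfolding recolouring_def by (auto split: if_splits)

lemma recolouring_hat: "\<forall>x \<in> X. \<mu> x \<in> X \<Longrightarrow> recolouring (hat X \<mu>)"
  using disj unfolding recolouring_def hat_def by auto

lemma local_action_at:
  assumes bij: "bij_betw c (arcs_out E u) S" and x: "x \<in> S"
  obtains b where "(u, b) \<in> E" "c (u, b) = x" "local_action E c S h u x = c (h u, h b)"
proof -
  obtain a where a: "a \<in> arcs_out E u" "c a = x" using bij x by (metis bij_betw_imp_surj_on imageE)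
  then have inv: "the_inv_into (arcs_out E u) c x = a" using bij by (metis bij_betw_def the_inv_into_f_f)
  obtain b where "a = (u, b)" "(u, b) \<in> E" using a(1) unfolding arcs_out_def by (cases a) auto
  then show ?thesis using that a x inv unfolding local_action_def amap_def by simp
qed

end

section \<open>Recolouring automorphisms\<close>

locale rooted_legal_tree = legal_tree E VX VY X Y c
  for E :: "('v \<times> 'v) set" and VX VY and X Y :: "'c set" and c +
  fixes r :: 'v
  assumes root: "r \<in> VX"
begin

definition twist :: "('c \<Rightarrow> 'c) \<Rightarrow> 'v \<Rightarrow> 'v" where
  "twist \<sigma> u = follow E c r (map \<sigma> (colour_word c (tree_path E r u)))"

lemma recolouring_in_colour_root:
  assumes \<sigma>: "recolouring \<sigma>" and "(x, r) \<in> E" "(y, r) \<in> E"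
  shows "c (x, r) = \<sigma> (c (y, r))"
proof -
  have "c (y, r) \<in> Y" using out_colour[OF assms(3)] edge_sides[OF assms(3)] root by simp
  then show ?thesis using \<sigma> in_colours_eq[OF assms(2,3)] unfolding recolouring_def by simp
qed

lemma follow_recoloured_walk:
  assumes \<sigma>: "recolouring \<sigma>"
  shows "is_walk E p \<Longrightarrow> p \<noteq> [] \<Longrightarrow> hd p = r \<Longrightarrow>
    (follow E c r (map \<sigma> (colour_word c p)) \<in> VX \<longleftrightarrow> last p \<in> VX) \<and>
    (\<forall>x y. (x, follow E c r (map \<sigma> (colour_word c p))) \<in> E \<longrightarrow> (y, last p) \<in> E \<longrightarrow>
        c (x, follow E c r (map \<sigma> (colour_word c p))) = \<sigma> (c (y, last p)))"
proof (induction p rule: rev_induct)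
  case Nil
  then show ?case by simp
next
  case (snoc b p)
  show ?case
  proof (cases "p = []")
    case True
    then have "b = r" using snoc.prems by simp
    have "follow E c r (map \<sigma> (colour_word c (p @ [b]))) = r" "last (p @ [b]) = r"
      using True \<open>b = r\<close> by simp_all
    then show ?thesis using root recolouring_in_colour_root[OF \<sigma>] by (simp only:) blast
  next
    case False
    let ?u = "follow E c r (map \<sigma> (colour_word c p))"
    let ?a = "last p"
    have walk: "is_walk E p" and edge: "(?a, b) \<in> E"
      using snoc.prems(1) False unfolding successively_append_iff[of _ p "[b]"] by simp_all
    have side: "?u \<in> VX \<longleftrightarrow> ?a \<in> VX" and incoming:
      "\<And>x y. (x, ?u) \<in> E \<Longrightarrow> (y, ?a) \<in> E \<Longrightarrow> c (x, ?u) = \<sigma> (c (y, ?a))"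
      using snoc.IH[OF walk False] snoc.prems False by auto
    have step: "follow E c r (map \<sigma> (colour_word c (p @ [b]))) = nbr E c ?u (\<sigma> (c (?a, b)))"
      using False by (simp add: colour_word_snoc follow_snoc)
    note next_edge = nbr_edge[OF recolouring_out_colour[OF \<sigma> side[symmetric] edge]]
    have "nbr E c ?u (\<sigma> (c (?a, b))) \<in> VX \<longleftrightarrow> b \<in> VX"
      using edge_sides[OF conjunct1[OF next_edge]] edge_sides[OF edge] side by auto
    moreover have "c (x, nbr E c ?u (\<sigma> (c (?a, b)))) = \<sigma> (c (y, b))"
      if "(x, nbr E c ?u (\<sigma> (c (?a, b)))) \<in> E" "(y, b) \<in> E" for x y
      using in_colours_eq[OF that(1) conjunct1[OF next_edge]] conjunct2[OF next_edge]
        in_colours_eq[OF that(2) edge] by simp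
    ultimately show ?thesis unfolding step last_snoc by blast
  qed
qed

lemma twist_root: "twist \<sigma> r = r"
proof -
  have "tree_path E r r = [r]" by (rule tree_path_eq[OF tree]) (auto simp: simple_path_def)
  then show ?thesis unfolding twist_def by simp
qed

lemma twist_at:
  assumes "recolouring \<sigma>"
  shows "(twist \<sigma> u \<in> VX \<longleftrightarrow> u \<in> VX) \<and>
    (\<forall>x y. (x, twist \<sigma> u) \<in> E \<longrightarrow> (y, u) \<in> E \<longrightarrow> c (x, twist \<sigma> u) = \<sigma> (c (y, u)))"
  using follow_recoloured_walk[OF assms] tree_path[OF tree, of r u]
  unfolding twist_def simple_path_def by simp

lemma twist_side: "recolouring \<sigma> \<Longrightarrow> twist \<sigma> u \<in> VX \<longleftrightarrow> u \<in> VX"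
  using twist_at by blast

lemma twist_edge:
  assumes \<sigma>: "recolouring \<sigma>" and edge: "(a, b) \<in> E"
  shows "(twist \<sigma> a, twist \<sigma> b) \<in> E \<and> c (twist \<sigma> a, twist \<sigma> b) = \<sigma> (c (a, b))"
  using tree_path_edge[OF tree edge]
proof
  assume path: "tree_path E r b = tree_path E r a @ [b]"
  have "twist \<sigma> b = nbr E c (twist \<sigma> a) (\<sigma> (c (a, b)))"
    unfolding twist_def path using tree_path[OF tree, of r a]
    by (simp add: simple_path_def colour_word_snoc follow_snoc)
  then show ?thesis
    using nbr_edge[OF recolouring_out_colour[OF \<sigma> twist_side[OF \<sigma>, symmetric] edge]] by simp
next
  assume path: "tree_path E r a = tree_path E r b @ [a]"
  have edge': "(b, a) \<in> E" by (rule tree_sym[OF tree edge])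
  have "twist \<sigma> a = nbr E c (twist \<sigma> b) (\<sigma> (c (b, a)))"
    unfolding twist_def path using tree_path[OF tree, of r b]
    by (simp add: simple_path_def colour_word_snoc follow_snoc)
  then have "(twist \<sigma> a, twist \<sigma> b) \<in> E"
    using nbr_edge[OF recolouring_out_colour[OF \<sigma> twist_side[OF \<sigma>, symmetric] edge']] tree_sym[OF tree] by simp
  then show ?thesis using twist_at[OF \<sigma>, of b] edge by blast
qed

lemma twist_unique:
  assumes \<sigma>: "recolouring \<sigma>"
    and edges: "\<And>a b. (a, b) \<in> E \<Longrightarrow> (h a, h b) \<in> E"
    and colours: "\<And>a b. (a, b) \<in> E \<Longrightarrow> c (h a, h b) = \<sigma> (c (a, b))"
    and "h r = r"
  shows "h = twist \<sigma>"
  by (rule maps_eq_if_same_colours[of h "twist \<sigma>" r])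
    (use edges colours twist_edge[OF \<sigma>] \<open>h r = r\<close> twist_root in simp_all)

lemma recolouring_comp: "recolouring \<sigma> \<Longrightarrow> recolouring \<tau> \<Longrightarrow> recolouring (\<sigma> \<circ> \<tau>)"
  unfolding recolouring_def by simp

lemma twist_comp:
  assumes "recolouring \<sigma>" "recolouring \<tau>"
  shows "twist \<sigma> \<circ> twist \<tau> = twist (\<sigma> \<circ> \<tau>)"
  by (rule twist_unique) (use assms recolouring_comp twist_edge twist_root in simp_all)

lemma twist_id: "twist id = id"
  using twist_unique[of id id] by (simp add: recolouring_def)

lemma twist_Aut:
  assumes \<sigma>: "recolouring \<sigma>" and \<tau>: "recolouring \<tau>" and inverse: "\<sigma> \<circ> \<tau> = id" "\<tau> \<circ> \<sigma> = id"
  shows "twist \<sigma> \<in> Aut E" and "twist \<sigma> ` VX = VX"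
proof -
  have "twist \<sigma> \<circ> twist \<tau> = id" "twist \<tau> \<circ> twist \<sigma> = id"
    using twist_comp[OF \<sigma> \<tau>] twist_comp[OF \<tau> \<sigma>] inverse twist_id by simp_all
  then have bij: "bij (twist \<sigma>)" and cancel: "\<And>u. twist \<tau> (twist \<sigma> u) = u"
    and cancel': "\<And>u. twist \<sigma> (twist \<tau> u) = u"
    by (auto intro: o_bij simp: pointfree_idE)
  have "(u, w) \<in> E" if "(twist \<sigma> u, twist \<sigma> w) \<in> E" for u w
    using conjunct1[OF twist_edge[OF \<tau> that]] unfolding cancel .
  then show "twist \<sigma> \<in> Aut E"
    using bij conjunct1[OF twist_edge[OF \<sigma>]] unfolding Aut_def by blast
  have "x \<in> twist \<sigma> ` VX" if "x \<in> VX" for x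
    using cancel'[of x] twist_side[OF \<tau>, of x] that by (metis image_eqI)
  then show "twist \<sigma> ` VX = VX" using twist_side[OF \<sigma>] by blast
qed

end

section \<open>Permutation groups\<close>

lemma hat_inv_into_cancel:
  assumes "bij_betw \<mu> S S"
  shows "hat S (inv_into S \<mu>) (hat S \<mu> z) = z" and "hat S \<mu> (hat S (inv_into S \<mu>) z) = z"
  using assms by (auto simp: hat_def bij_betw_def inv_into_into f_inv_into_f)

lemma Aut_comp: "g \<in> Aut E \<Longrightarrow> h \<in> Aut E \<Longrightarrow> g \<circ> h \<in> Aut E"
  unfolding Aut_def by (auto intro: bij_comp)

lemma carrier_BijGroup: "carrier (BijGroup S) = Bij S"
  by (simp add: BijGroup_def)

lemma BijGroup_mult: "f \<in> Bij S \<Longrightarrow> g \<in> Bij S \<Longrightarrow> f \<otimes>\<^bsub>BijGroup S\<^esub> g = compose S f g"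
  by (simp add: BijGroup_def)

lemma one_BijGroup: "\<one>\<^bsub>BijGroup S\<^esub> = (\<lambda>x \<in> S. x)"
  by (simp add: BijGroup_def)

lemma Bij_UNIV: "Bij UNIV = {f. bij f}"
  by (simp add: Bij_def bij_betw_def bij_def)

lemma BijGroup_UNIV_mult: "bij f \<Longrightarrow> bij g \<Longrightarrow> f \<otimes>\<^bsub>BijGroup UNIV\<^esub> g = f \<circ> g"
  by (simp add: BijGroup_def Bij_UNIV compose_def restrict_UNIV comp_def)

lemma subgroup_restrict_carrier:
  assumes G: "group G" and H: "subgroup H G" and "H \<subseteq> K" "K \<subseteq> carrier G"
  shows "subgroup H (G\<lparr>carrier := K\<rparr>)"
proof -
  interpret G: group G by (rule G)
  have "inv\<^bsub>G\<lparr>carrier := K\<rparr>\<^esub> x = inv\<^bsub>G\<^esub> x" if "x \<in> H" for x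
  proof -
    have x: "x \<in> carrier G" and inv: "inv\<^bsub>G\<^esub> x \<in> H"
      using H that by (auto dest: subgroup.subset subgroup.m_inv_closed)
    show ?thesis
      unfolding m_inv_def
      by (rule the_equality) (use x inv assms(3,4) G.inv_equality in \<open>auto simp: m_inv_def[symmetric]\<close>)
  qed
  then show ?thesis
    using H assms(3) unfolding subgroup_def by auto
qed

lemma subgroup_image_iso:
  assumes G: "group G" and K: "subgroup K G" and h: "h \<in> hom G H" and inj: "inj_on h K"
  shows "H\<lparr>carrier := h ` K\<rparr> \<cong> G\<lparr>carrier := K\<rparr>"
proof -
  have "h \<in> iso (G\<lparr>carrier := K\<rparr>) (H\<lparr>carrier := h ` K\<rparr>)"
    using h inj subgroup.subset[OF K] unfolding iso_def hom_def bij_betw_def by auto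
  then show ?thesis by (rule group.iso_sym[OF subgroup.subgroup_is_group[OF K G] is_isoI])
qed

lemma (in group) subgroup_inv_image:
  assumes H: "subgroup H G"
  shows "(\<lambda>x. inv x) ` H = H"
proof
  show "(\<lambda>x. inv x) ` H \<subseteq> H" using subgroup.m_inv_closed[OF H] by (rule image_subsetI)
  show "H \<subseteq> (\<lambda>x. inv x) ` H"
  proof
    fix x assume x: "x \<in> H"
    show "x \<in> (\<lambda>x. inv x) ` H"
      using inv_inv[OF subgroup.mem_carrier[OF H x], symmetric] subgroup.m_inv_closed[OF H x]
      by (rule image_eqI)
  qed
qed

section \<open>The automorphisms g_{\<mu>,v}\<close>

context rooted_legal_tree
begin

lemma g_at_iff:
  assumes \<mu>: "\<mu> \<in> Bij X"
  shows "g \<in> Aut E \<and> g ` VX = VX \<and> g r = r \<and> (\<forall>a \<in> E. c a = hat X \<mu> (c (amap g a)))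
    \<longleftrightarrow> g = g_at E VX c X \<mu> r"
proof -
  let ?\<sigma> = "hat X (inv_into X \<mu>)"
  have bij: "bij_betw \<mu> X X" using \<mu> by (simp add: Bij_def)
  have \<sigma>: "recolouring ?\<sigma>" and \<sigma>': "recolouring (hat X \<mu>)"
    using bij by (auto intro!: recolouring_hat simp: bij_betw_def inv_into_into)
  have inverse: "?\<sigma> \<circ> hat X \<mu> = id" "hat X \<mu> \<circ> ?\<sigma> = id"
    using hat_inv_into_cancel[OF bij] by auto
  have spec_iff: "g \<in> Aut E \<and> g ` VX = VX \<and> g r = r \<and> (\<forall>a \<in> E. c a = hat X \<mu> (c (amap g a)))
    \<longleftrightarrow> g = twist ?\<sigma>" for g
  proof
    assume spec: "g \<in> Aut E \<and> g ` VX = VX \<and> g r = r \<and> (\<forall>a \<in> E. c a = hat X \<mu> (c (amap g a)))"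
    show "g = twist ?\<sigma>"
    proof (rule twist_unique[OF \<sigma>])
      show "(g a, g b) \<in> E" if "(a, b) \<in> E" for a b using spec that unfolding Aut_def by blast
      show "c (g a, g b) = ?\<sigma> (c (a, b))" if "(a, b) \<in> E" for a b
        using spec that hat_inv_into_cancel(1)[OF bij] unfolding amap_def by force
      show "g r = r" using spec by blast
    qed
  next
    assume "g = twist ?\<sigma>"
    moreover have "c a = hat X \<mu> (c (amap (twist ?\<sigma>) a))" if "a \<in> E" for a
      using twist_edge[OF \<sigma>, of "fst a" "snd a"] that hat_inv_into_cancel(2)[OF bij]
      unfolding amap_def by simp
    ultimately show "g \<in> Aut E \<and> g ` VX = VX \<and> g r = r \<and> (\<forall>a \<in> E. c a = hat X \<mu> (c (amap g a)))"
      using twist_Aut[OF \<sigma> \<sigma>' inverse] twist_root by blast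
  qed
  then show ?thesis unfolding g_at_def by simp
qed

lemma g_at_spec:
  "\<mu> \<in> Bij X \<Longrightarrow> g_at E VX c X \<mu> r \<in> Aut E \<and> g_at E VX c X \<mu> r ` VX = VX \<and> g_at E VX c X \<mu> r r = r
    \<and> (\<forall>a \<in> E. c a = hat X \<mu> (c (amap (g_at E VX c X \<mu> r) a)))"
  using g_at_iff by blast

text \<open>As c = hat \<mu> \<circ> c \<circ> g_\<mu>, the assignment \<mu> \<mapsto> g_\<mu> reverses products.\<close>

lemma g_at_comp:
  assumes \<mu>: "\<mu> \<in> Bij X" and \<mu>': "\<mu>' \<in> Bij X"
  shows "g_at E VX c X \<mu> r \<circ> g_at E VX c X \<mu>' r = g_at E VX c X (compose X \<mu>' \<mu>) r"
proof -
  let ?g = "g_at E VX c X \<mu> r" and ?g' = "g_at E VX c X \<mu>' r"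
  have "c a = hat X (compose X \<mu>' \<mu>) (c (amap (?g \<circ> ?g') a))" if a: "a \<in> E" for a
  proof -
    have "amap ?g' a \<in> E"
      using g_at_spec[OF \<mu>'] a unfolding Aut_def amap_def by (cases a) auto
    have "c a = hat X \<mu>' (c (amap ?g' a))" using g_at_spec[OF \<mu>'] a by blast
    also have "c (amap ?g' a) = hat X \<mu> (c (amap ?g (amap ?g' a)))"
      using g_at_spec[OF \<mu>] \<open>amap ?g' a \<in> E\<close> by blast
    finally have "c a = hat X \<mu>' (hat X \<mu> (c (amap ?g (amap ?g' a))))" .
    moreover have "hat X \<mu>' (hat X \<mu> z) = hat X (compose X \<mu>' \<mu>) z" for z
      using Bij_imp_funcset[OF \<mu>] by (auto simp: hat_def compose_eq)
    ultimately show ?thesis by (simp add: amap_def)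
  qed
  moreover have "?g \<circ> ?g' \<in> Aut E" by (rule Aut_comp) (use g_at_spec[OF \<mu>] g_at_spec[OF \<mu>'] in simp_all)
  moreover have "(?g \<circ> ?g') ` VX = VX"
    unfolding image_comp[symmetric] using g_at_spec[OF \<mu>] g_at_spec[OF \<mu>'] by simp
  moreover have "(?g \<circ> ?g') r = r" using g_at_spec[OF \<mu>] g_at_spec[OF \<mu>'] by simp
  ultimately show ?thesis by (intro g_at_iff[OF compose_Bij[OF \<mu>' \<mu>], THEN iffD1] conjI ballI)
qed

lemma g_at_inj:
  assumes \<mu>: "\<mu> \<in> Bij X" and \<mu>': "\<mu>' \<in> Bij X" and eq: "g_at E VX c X \<mu> r = g_at E VX c X \<mu>' r"
  shows "\<mu> = \<mu>'"
proof (rule extensionalityI[OF Bij_imp_extensional[OF \<mu>] Bij_imp_extensional[OF \<mu>']])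
  fix x assume x: "x \<in> X"
  let ?g = "g_at E VX c X \<mu> r"
  obtain b where b: "(r, b) \<in> E" "c (r, b) = x" using out_colour_surj[of x r] x root by auto
  have "bij ?g" "\<And>u w. (u, w) \<in> E \<longleftrightarrow> (?g u, ?g w) \<in> E" "?g r = r"
    using g_at_spec[OF \<mu>] unfolding Aut_def by blast+
  then obtain b' where "(r, b') \<in> E" and arc: "amap ?g (r, b') = (r, b)"
    using b(1) unfolding amap_def by (metis bij_pointE fst_conv snd_conv)
  have "c (r, b') = hat X \<mu> (c (amap ?g (r, b')))"
    using g_at_spec[OF \<mu>] \<open>(r, b') \<in> E\<close> by blast
  moreover have "c (r, b') = hat X \<mu>' (c (amap ?g (r, b')))"
    using g_at_spec[OF \<mu>'] \<open>(r, b') \<in> E\<close> unfolding eq by blast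
  ultimately show "\<mu> x = \<mu>' x" using arc b(2) x by (simp add: hat_def)
qed

lemma local_action_g_at_VX:
  assumes \<mu>: "\<mu> \<in> Bij X" and u: "u \<in> VX"
  shows "local_action E c X (g_at E VX c X \<mu> r) u = inv\<^bsub>BijGroup X\<^esub> \<mu>"
  unfolding inv_BijGroup[OF \<mu>]
proof (rule extensionalityI)
  fix x assume x: "x \<in> X"
  let ?g = "g_at E VX c X \<mu> r"
  obtain b where b: "(u, b) \<in> E" "c (u, b) = x" and action: "local_action E c X ?g u x = c (?g u, ?g b)"
    using local_action_at[of u X x ?g] out_colours[of u] u x by auto
  have "(?g u, ?g b) \<in> E" "?g u \<in> VX" using g_at_spec[OF \<mu>] b(1) u unfolding Aut_def by auto
  then have "c (?g u, ?g b) \<in> X" using out_colour by fastforce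
  moreover have "x = \<mu> (c (?g u, ?g b))"
    using g_at_spec[OF \<mu>] b calculation unfolding amap_def by (force simp: hat_def)
  ultimately show "local_action E c X ?g u x = (\<lambda>x \<in> X. inv_into X \<mu> x) x"
    using action x Bij_imp_funcset[OF \<mu>] \<mu> by (simp add: Bij_def bij_betw_def)
qed (auto simp: local_action_def)

lemma local_action_g_at_VY:
  assumes \<mu>: "\<mu> \<in> Bij X" and u: "u \<in> VY"
  shows "local_action E c Y (g_at E VX c X \<mu> r) u = \<one>\<^bsub>BijGroup Y\<^esub>"
  unfolding one_BijGroup
proof (rule extensionalityI)
  fix y assume y: "y \<in> Y"
  let ?g = "g_at E VX c X \<mu> r"
  have u': "u \<notin> VX" using u VY_eq by simp
  obtain b where b: "(u, b) \<in> E" "c (u, b) = y" and action: "local_action E c Y ?g u y = c (?g u, ?g b)"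
    using local_action_at[of u Y y ?g] out_colours[of u] u' y by auto
  have edge: "(?g u, ?g b) \<in> E" and "bij ?g" and "?g ` VX = VX"
    using g_at_spec[OF \<mu>] b(1) unfolding Aut_def by auto
  then have "?g u \<notin> VX" using u' inj_image_mem_iff[OF bij_is_inj, of ?g u VX] by simp
  then have "c (?g u, ?g b) \<in> Y" using out_colour[OF edge] by simp
  then have "c (?g u, ?g b) = y"
    using g_at_spec[OF \<mu>] b disj unfolding amap_def by (force simp: hat_def)
  then show "local_action E c Y ?g u y = (\<lambda>x \<in> Y. x) y" using action y by simp
qed (auto simp: local_action_def)

lemma g_at_in_stab:
  assumes M: "subgroup M (BijGroup X)" and N: "subgroup N (BijGroup Y)" and \<mu>: "\<mu> \<in> M"
  shows "g_at E VX c X \<mu> r \<in> stab (U_c E VX VY X Y c M N) r"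
proof -
  have \<mu>': "\<mu> \<in> Bij X" using subgroup.subset[OF M] \<mu> by (auto simp: carrier_BijGroup)
  then show ?thesis
    using g_at_spec[OF \<mu>'] local_action_g_at_VX[OF \<mu>'] local_action_g_at_VY[OF \<mu>']
      subgroup.m_inv_closed[OF M \<mu>] subgroup.one_closed[OF N]
    unfolding stab_def U_c_def by auto
qed

lemma g_at_inv_hom:
  "(\<lambda>\<mu>. g_at E VX c X (inv\<^bsub>BijGroup X\<^esub> \<mu>) r) \<in> hom (BijGroup X) (BijGroup UNIV)"
proof (rule homI)
  interpret BijX: group "BijGroup X" by (rule group_BijGroup)
  have Bij: "inv\<^bsub>BijGroup X\<^esub> \<mu> \<in> Bij X" if "\<mu> \<in> carrier (BijGroup X)" for \<mu>
    using BijX.inv_closed[OF that] by (simp add: carrier_BijGroup)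
  have bij: "bij (g_at E VX c X (inv\<^bsub>BijGroup X\<^esub> \<mu>) r)" if "\<mu> \<in> carrier (BijGroup X)" for \<mu>
    using g_at_spec[OF Bij[OF that]] unfolding Aut_def by blast
  show "g_at E VX c X (inv\<^bsub>BijGroup X\<^esub> \<mu>) r \<in> carrier (BijGroup UNIV)"
    if "\<mu> \<in> carrier (BijGroup X)" for \<mu>
    using bij[OF that] by (simp add: carrier_BijGroup Bij_UNIV)
  fix \<mu> \<nu> assume \<mu>: "\<mu> \<in> carrier (BijGroup X)" and \<nu>: "\<nu> \<in> carrier (BijGroup X)"
  have "inv\<^bsub>BijGroup X\<^esub> (\<mu> \<otimes>\<^bsub>BijGroup X\<^esub> \<nu>) =
      compose X (inv\<^bsub>BijGroup X\<^esub> \<nu>) (inv\<^bsub>BijGroup X\<^esub> \<mu>)"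
    using BijX.inv_mult_group[OF \<mu> \<nu>] Bij[OF \<mu>] Bij[OF \<nu>] by (simp add: BijGroup_mult)
  then show "g_at E VX c X (inv\<^bsub>BijGroup X\<^esub> (\<mu> \<otimes>\<^bsub>BijGroup X\<^esub> \<nu>)) r =
      g_at E VX c X (inv\<^bsub>BijGroup X\<^esub> \<mu>) r \<otimes>\<^bsub>BijGroup UNIV\<^esub> g_at E VX c X (inv\<^bsub>BijGroup X\<^esub> \<nu>) r"
    using g_at_comp[OF Bij[OF \<mu>] Bij[OF \<nu>]] bij[OF \<mu>] bij[OF \<nu>] by (simp add: BijGroup_UNIV_mult)
qed

lemma g_at_inv_inj: "inj_on (\<lambda>\<mu>. g_at E VX c X (inv\<^bsub>BijGroup X\<^esub> \<mu>) r) (carrier (BijGroup X))"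
proof (rule inj_onI)
  interpret BijX: group "BijGroup X" by (rule group_BijGroup)
  fix \<mu> \<nu> assume \<mu>: "\<mu> \<in> carrier (BijGroup X)" and \<nu>: "\<nu> \<in> carrier (BijGroup X)"
    and "g_at E VX c X (inv\<^bsub>BijGroup X\<^esub> \<mu>) r = g_at E VX c X (inv\<^bsub>BijGroup X\<^esub> \<nu>) r"
  then have "inv\<^bsub>BijGroup X\<^esub> \<mu> = inv\<^bsub>BijGroup X\<^esub> \<nu>"
    using BijX.inv_closed by (intro g_at_inj) (auto simp: carrier_BijGroup)
  then show "\<mu> = \<nu>" using BijX.inv_inv[OF \<mu>] BijX.inv_inv[OF \<nu>] by metis
qed

lemma g_at_subgroup_iso:
  assumes M: "subgroup M (BijGroup X)" and N: "subgroup N (BijGroup Y)"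
  shows "subgroup ((\<lambda>\<mu>. g_at E VX c X \<mu> r) ` M)
      ((BijGroup UNIV)\<lparr>carrier := stab (U_c E VX VY X Y c M N) r\<rparr>)"
    and "(BijGroup UNIV)\<lparr>carrier := (\<lambda>\<mu>. g_at E VX c X \<mu> r) ` M\<rparr> \<cong> (BijGroup X)\<lparr>carrier := M\<rparr>"
proof -
  interpret BijX: group "BijGroup X" by (rule group_BijGroup)
  interpret hom: group_hom "BijGroup X" "BijGroup UNIV" "\<lambda>\<mu>. g_at E VX c X (inv\<^bsub>BijGroup X\<^esub> \<mu>) r"
    by (intro group_hom.intro group_hom_axioms.intro group_BijGroup g_at_inv_hom)
  let ?\<phi> = "\<lambda>\<mu>. g_at E VX c X (inv\<^bsub>BijGroup X\<^esub> \<mu>) r"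
  have image: "?\<phi> ` M = (\<lambda>\<mu>. g_at E VX c X \<mu> r) ` M"
    using BijX.subgroup_inv_image[OF M] image_image[of "\<lambda>\<mu>. g_at E VX c X \<mu> r" "m_inv (BijGroup X)" M]
    by simp
  have "inj_on ?\<phi> M"
    using g_at_inv_inj subgroup.subset[OF M] inj_on_subset by blast
  then show "(BijGroup UNIV)\<lparr>carrier := (\<lambda>\<mu>. g_at E VX c X \<mu> r) ` M\<rparr> \<cong> (BijGroup X)\<lparr>carrier := M\<rparr>"
    using subgroup_image_iso[OF group_BijGroup M g_at_inv_hom] image by simp
  have "stab (U_c E VX VY X Y c M N) r \<subseteq> carrier (BijGroup UNIV)"
    unfolding stab_def U_c_def Aut_def by (auto simp: carrier_BijGroup Bij_UNIV)
  then show "subgroup ((\<lambda>\<mu>. g_at E VX c X \<mu> r) ` M)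
      ((BijGroup UNIV)\<lparr>carrier := stab (U_c E VX VY X Y c M N) r\<rparr>)"
    using subgroup_restrict_carrier[OF group_BijGroup hom.subgroup_img_is_subgroup[OF M]]
      g_at_in_stab[OF M N] image by auto
qed

end

section \<open>Exchanging the roles of X and Y\<close>

lemma bipartition_swap: "bipartition E VX VY \<Longrightarrow> bipartition E VY VX"
  unfolding bipartition_def by blast

lemma legal_colouring_swap: "legal_colouring E VX VY X Y c \<Longrightarrow> legal_colouring E VY VX Y X c"
  unfolding legal_colouring_def by blast

lemma Aut_image_swap:
  assumes "bipartition E VX VY" "g \<in> Aut E"
  shows "g ` VY = VY \<longleftrightarrow> g ` VX = VX"
proof -
  have "VY = - VX" using assms(1) unfolding bipartition_def by auto
  moreover have "bij g" using assms(2) unfolding Aut_def by blast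
  ultimately show ?thesis by (metis bij_image_Compl_eq double_complement)
qed

lemma U_c_swap: "bipartition E VX VY \<Longrightarrow> U_c E VY VX Y X c N M = U_c E VX VY X Y c M N"
  unfolding U_c_def by (rule Collect_cong) (use Aut_image_swap[of E VX VY] in blast)

lemma g_at_swap: "bipartition E VX VY \<Longrightarrow> g_at E VY c S \<mu> r = g_at E VX c S \<mu> r"
  unfolding g_at_def by (intro arg_cong[where f = The] ext) (use Aut_image_swap[of E VX VY] in blast)

theorem proposition3p9:
  fixes E :: "('v \<times> 'v) set" and VX VY :: "'v set"
    and X Y :: "'c set" and c :: "'v \<times> 'v \<Rightarrow> 'c"
    and M N :: "('c \<Rightarrow> 'c) set" and v w :: 'v
  assumes disj: "X \<inter> Y = {}"
    and X2: "\<exists>x1 \<in> X. \<exists>x2 \<in> X. x1 \<noteq> x2"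
    and Y2: "\<exists>y1 \<in> Y. \<exists>y2 \<in> Y. y1 \<noteq> y2"
    and M: "subgroup M (BijGroup X)" and M_nontriv: "\<exists>\<mu> \<in> M. \<exists>x \<in> X. \<mu> x \<noteq> x"
    and N: "subgroup N (BijGroup Y)" and N_nontriv: "\<exists>\<tau> \<in> N. \<exists>y \<in> Y. \<tau> y \<noteq> y"
    and tree: "is_tree E"
    and bip: "bipartition E VX VY"
    and col: "legal_colouring E VX VY X Y c"
    and v: "v \<in> VX" and w: "w \<in> VY"
  shows "subgroup ((\<lambda>\<mu>. g_at E VX c X \<mu> v) ` M)
           ((BijGroup UNIV)\<lparr>carrier := stab (U_c E VX VY X Y c M N) v\<rparr>)
       \<and> subgroup ((\<lambda>\<tau>. g_at E VX c Y \<tau> w) ` N)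
           ((BijGroup UNIV)\<lparr>carrier := stab (U_c E VX VY X Y c M N) w\<rparr>)
       \<and> (BijGroup UNIV)\<lparr>carrier := (\<lambda>\<mu>. g_at E VX c X \<mu> v) ` M\<rparr> \<cong> (BijGroup X)\<lparr>carrier := M\<rparr>
       \<and> (BijGroup UNIV)\<lparr>carrier := (\<lambda>\<tau>. g_at E VX c Y \<tau> w) ` N\<rparr> \<cong> (BijGroup Y)\<lparr>carrier := N\<rparr>"
proof -
  interpret X_side: rooted_legal_tree E VX VY X Y c v
    using tree bip col disj v by unfold_locales
  interpret Y_side: rooted_legal_tree E VY VX Y X c w
    using tree bipartition_swap[OF bip] legal_colouring_swap[OF col] disj w by unfold_locales auto
  show ?thesis
    using X_side.g_at_subgroup_iso[OF M N] Y_side.g_at_subgroup_iso[OF N M]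
    unfolding g_at_swap[OF bip] U_c_swap[OF bip] by (intro conjI)
qed

end
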